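(* Assume the setting below. For all $k\in\mathbb{N}$ and all integers $i\ge e-1$, $\mu_{k,i}=\mu_{k,i+1}$.
   Context: Let $K$ be a difference field of characteristic $0$, i.e. a field of characteristic $0$ with a field endomorphism $\sigma$. Let $\mathcal{Y}=\{y_1,\ldots,y_n\}$ be difference indeterminates and $K\{\mathcal{Y}\}$ the difference polynomial ring: the polynomial ring over $K$ in the variables $y_j^{(l)}$ ($1\le j\le n$, $l\in\mathbb{N}$), with $\sigma(y_j^{(l)})=y_j^{(l+1)}$. For $f\in K\{\mathcal{Y}\}$ write $f^{(j)}=\sigma^j(f)$. A $\sigma$-ideal is an ideal stable under $\sigma$; it is reflexive if $\sigma(a)\in I$ implies $a\in I$, and $\sigma$-prime if reflexive and prime. Let $\mathcal{Y}^{(k)}=\{y_1^{(k)},\dots,y_n^{(k)}\}$. Let $F=\{f_1,\ldots,f_r\}\subset K\{\mathcal{Y}\}$, $F^{(j)}=\{f_1^{(j)},\dots,f_r^{(j)}\}$, and let $e\ge1$ be the maximal $l$ such that some $y_j^{(l)}$ occurs in $F$. Let $\mathfrak{p}$ be a $\sigma$-prime ideal of $K\{\mathcal{Y}\}$ minimal over the $\sigma$-ideal $[F]$, and let $\kappa$ be the residue field of $\mathfrak{p}$ (the fraction field of $K\{\mathcal{Y}\}/\mathfrak{p}$). For $k\ge1$ and $i\ge e-1$, let $J_{k,i}$ be the $kr\times kn$ matrix $\partial(F^{(i-e+1)},\ldots,F^{(i-e+k)})/\partial(\mathcal{Y}^{(i+1)},\ldots,\mathcal{Y}^{(i+k)})$,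 i.e. its $(a,b)$ block ($1\le a,b\le k$) is the $r\times n$ matrix $(\partial f_l^{(i-e+a)}/\partial y_j^{(i+b)})_{l,j}$. Define $\mu_{0,i}:=0$ and, for $k\ge1$, $\mu_{k,i}:=\dim_\kappa\ker(J_{k,i}^{\tau})=kr-\operatorname{rank}_\kappa(J_{k,i})$, where $J_{k,i}^\tau$ is the transpose and $J_{k,i}$ is considered over $\kappa$ via the images of its entries. *)

theory Defs
  imports "HOL-Library.Poly_Mapping"
begin

text \<open>Difference polynomial ring K{Y}: the indeterminates y_j^(l) are indexed by
  pairs (j, l) with j in a finite type 'v (so n = CARD('v)) and l a natural number.\<close>

type_synonym ('v, 'a) dpoly = "(('v \<times> nat) \<Rightarrow>\<^sub>0 nat) \<Rightarrow>\<^sub>0 'a"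

definition field_endo :: "('a::field \<Rightarrow> 'a) \<Rightarrow> bool" where
  "field_endo s \<longleftrightarrow> (\<forall>x y. s (x + y) = s x + s y) \<and> (\<forall>x y. s (x * y) = s x * s y) \<and> s 1 = 1"

definition shift_monom :: "(('v \<times> nat) \<Rightarrow>\<^sub>0 nat) \<Rightarrow> (('v \<times> nat) \<Rightarrow>\<^sub>0 nat)" where
  "shift_monom m = (\<Sum>v\<in>Poly_Mapping.keys m. Poly_Mapping.single (fst v, Suc (snd v)) (Poly_Mapping.lookup m v))"

definition dsigma :: "('a::field \<Rightarrow> 'a) \<Rightarrow> ('v, 'a) dpoly \<Rightarrow> ('v, 'a) dpoly" where
  "dsigma s f = (\<Sum>m\<in>Poly_Mapping.keys f. Poly_Mapping.single (shift_monom m) (s (Poly_Mapping.lookup f m)))"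

definition pdiff :: "'v \<times> nat \<Rightarrow> ('v, 'a::field) dpoly \<Rightarrow> ('v, 'a) dpoly" where
  "pdiff v f = (\<Sum>m\<in>Poly_Mapping.keys f.
      Poly_Mapping.single (m - Poly_Mapping.single v 1) (of_nat (Poly_Mapping.lookup m v) * Poly_Mapping.lookup f m))"

definition is_ideal :: "('v, 'a::field) dpoly set \<Rightarrow> bool" where
  "is_ideal I \<longleftrightarrow> 0 \<in> I \<and> (\<forall>a\<in>I. \<forall>b\<in>I. a + b \<in> I) \<and> (\<forall>a\<in>I. \<forall>c. c * a \<in> I)"

definition sigma_ideal :: "('a::field \<Rightarrow> 'a) \<Rightarrow> ('v, 'a) dpoly set \<Rightarrow> bool" where
  "sigma_ideal s I \<longleftrightarrow> is_ideal I \<and> (\<forall>a\<in>I. dsigma s a \<in> I)"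

definition reflexive_ideal :: "('a::field \<Rightarrow> 'a) \<Rightarrow> ('v, 'a) dpoly set \<Rightarrow> bool" where
  "reflexive_ideal s I \<longleftrightarrow> (\<forall>a. dsigma s a \<in> I \<longrightarrow> a \<in> I)"

definition prime_ideal :: "('v, 'a::field) dpoly set \<Rightarrow> bool" where
  "prime_ideal I \<longleftrightarrow> is_ideal I \<and> I \<noteq> UNIV \<and> (\<forall>a b. a * b \<in> I \<longrightarrow> a \<in> I \<or> b \<in> I)"

definition sigma_prime :: "('a::field \<Rightarrow> 'a) \<Rightarrow> ('v, 'a) dpoly set \<Rightarrow> bool" where
  "sigma_prime s P \<longleftrightarrow> sigma_ideal s P \<and> reflexive_ideal s P \<and> prime_ideal P"

definition sigma_ideal_gen :: "('a::field \<Rightarrow> 'a) \<Rightarrow> ('v, 'a) dpoly set \<Rightarrow> ('v, 'a) dpoly set" where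
  "sigma_ideal_gen s F = \<Inter> {I. sigma_ideal s I \<and> F \<subseteq> I}"

definition minimal_sigma_prime_over :: "('a::field \<Rightarrow> 'a) \<Rightarrow> ('v, 'a) dpoly set \<Rightarrow> ('v, 'a) dpoly set \<Rightarrow> bool" where
  "minimal_sigma_prime_over s F P \<longleftrightarrow> sigma_prime s P \<and> sigma_ideal_gen s F \<subseteq> P \<and>
     (\<forall>Q. sigma_prime s Q \<and> sigma_ideal_gen s F \<subseteq> Q \<and> Q \<subseteq> P \<longrightarrow> Q = P)"

definition is_max_order :: "('v, 'a::field) dpoly list \<Rightarrow> nat \<Rightarrow> bool" where
  "is_max_order fs e \<longleftrightarrow>
     (\<exists>f\<in>set fs. \<exists>m\<in>Poly_Mapping.keys f. \<exists>j. Poly_Mapping.lookup m (j, e) \<noteq> 0) \<and>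
     (\<forall>f\<in>set fs. \<forall>m\<in>Poly_Mapping.keys f. \<forall>j l. Poly_Mapping.lookup m (j, l) \<noteq> 0 \<longrightarrow> l \<le> e)"

text \<open>Entries of J_{k,i}: row index (a, l) with 1 \<le> a \<le> k and l < r (the l-th element
  of F, 0-based), column index (b, j) with 1 \<le> b \<le> k and j :: 'v; the entry is
  the partial derivative of f_l^(i-e+a) with respect to y_j^(i+b).\<close>
definition jac_entry :: "('a::field \<Rightarrow> 'a) \<Rightarrow> ('v, 'a) dpoly list \<Rightarrow> nat \<Rightarrow> nat
    \<Rightarrow> nat \<times> nat \<Rightarrow> nat \<times> 'v \<Rightarrow> ('v, 'a) dpoly" where
  "jac_entry s fs e i rw cl =
     pdiff (snd cl, i + fst cl) ((dsigma s ^^ (i + fst rw - e)) (fs ! snd rw))"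

definition jac_rows :: "nat \<Rightarrow> nat \<Rightarrow> (nat \<times> nat) set" where
  "jac_rows k r = {1..k} \<times> {..<r}"

definition jac_cols :: "nat \<Rightarrow> (nat \<times> 'v) set" where
  "jac_cols k = {1..k} \<times> UNIV"

text \<open>A set S of rows of a matrix M (with entries in K{Y}) is linearly independent over
  the domain K{Y}/P: every combination with coefficients in K{Y} that vanishes modulo P
  has all coefficients in P.  Since K{Y}/P is a domain with fraction field kappa, this
  is linear independence of the image rows over kappa.\<close>
definition rows_indep_mod :: "('v, 'a::field) dpoly set \<Rightarrow> 'r set \<Rightarrow> 'c set
    \<Rightarrow> ('r \<Rightarrow> 'c \<Rightarrow> ('v, 'a) dpoly) \<Rightarrow> bool" where
  "rows_indep_mod P S C M \<longleftrightarrow>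
     (\<forall>c. (\<forall>col\<in>C. (\<Sum>x\<in>S. c x * M x col) \<in> P) \<longrightarrow> (\<forall>x\<in>S. c x \<in> P))"

definition rank_mod :: "('v, 'a::field) dpoly set \<Rightarrow> 'r set \<Rightarrow> 'c set
    \<Rightarrow> ('r \<Rightarrow> 'c \<Rightarrow> ('v, 'a) dpoly) \<Rightarrow> nat" where
  "rank_mod P R C M = Max (card ` {S. S \<subseteq> R \<and> rows_indep_mod P S C M})"

definition mu :: "('a::field \<Rightarrow> 'a) \<Rightarrow> ('v, 'a) dpoly list \<Rightarrow> nat \<Rightarrow> ('v, 'a) dpoly set
    \<Rightarrow> nat \<Rightarrow> nat \<Rightarrow> nat" where
  "mu s fs e P k i = k * length fs -
     rank_mod P (jac_rows k (length fs)) (jac_cols k :: (nat \<times> 'v) set) (jac_entry s fs e i)"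

end

theory Submission
  imports Defs
begin

text \<open>Differentiation commutes with the shift: the derivative of sigma(f) with respect to
  y_j^(l+1) is sigma applied to the derivative of f with respect to y_j^(l). Hence J_{k,i+1} is
  J_{k,i} with sigma applied to every entry. Since P is a reflexive sigma-ideal, sigma induces an
  injective endomorphism of the domain K{Y}/P, and such a map preserves ranks over the fraction
  field: linear independence of rows can be decided by fraction-free Gaussian elimination, which
  commutes with ring homomorphisms, and a map reflecting P sends pivots outside P to pivots
  outside P.\<close>

lemma ideal_add: "is_ideal P \<Longrightarrow> a \<in> P \<Longrightarrow> b \<in> P \<Longrightarrow> a + b \<in> P"
  unfolding is_ideal_def by blast

lemma ideal_mult_left: "is_ideal P \<Longrightarrow> a \<in> P \<Longrightarrow> c * a \<in> P"
  unfolding is_ideal_def by blast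

lemma ideal_mult_right: "is_ideal P \<Longrightarrow> a \<in> P \<Longrightarrow> a * c \<in> P"
  unfolding is_ideal_def by (metis mult.commute)

lemma ideal_diff: "is_ideal P \<Longrightarrow> a \<in> P \<Longrightarrow> b \<in> P \<Longrightarrow> a - b \<in> P"
  by (metis ideal_add ideal_mult_left mult_minus1 diff_conv_add_uminus)

lemma ideal_sum_mult:
  assumes "is_ideal P" "\<forall>x\<in>T. c x \<in> P"
  shows "(\<Sum>x\<in>T. c x * g x) \<in> P"
  using assms(2)
  by (induction T rule: infinite_finite_induct)
     (use assms(1) in \<open>auto simp: is_ideal_def ideal_add ideal_mult_right\<close>)

lemma prime_ideal_one_notin: "prime_ideal P \<Longrightarrow> 1 \<notin> P"
  unfolding prime_ideal_def by (metis UNIV_eq_I ideal_mult_left mult.right_neutral)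

lemma prime_idealD: "prime_ideal P \<Longrightarrow> a * b \<in> P \<Longrightarrow> a \<in> P \<or> b \<in> P"
  unfolding prime_ideal_def by blast

lemma rows_indep_modD:
  "rows_indep_mod P S C M \<Longrightarrow> \<forall>c\<in>C. (\<Sum>x\<in>S. d x * M x c) \<in> P \<Longrightarrow> x \<in> S \<Longrightarrow> d x \<in> P"
  unfolding rows_indep_mod_def by blast

lemma rank_mod_eqI:
  assumes "\<And>S. S \<subseteq> R \<Longrightarrow> rows_indep_mod P S C M \<longleftrightarrow> rows_indep_mod P S C M'"
  shows "rank_mod P R C M = rank_mod P R C M'"
proof -
  have "{S. S \<subseteq> R \<and> rows_indep_mod P S C M} = {S. S \<subseteq> R \<and> rows_indep_mod P S C M'}"
    using assms by blast
  then show ?thesis by (simp add: rank_mod_def)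
qed

text \<open>One step of fraction-free Gaussian elimination with pivot entry \<open>M x\<^sub>0 c\<^sub>0\<close>.\<close>
definition pivot_elim :: "('r \<Rightarrow> 'c \<Rightarrow> 'b::comm_ring) \<Rightarrow> 'r \<Rightarrow> 'c \<Rightarrow> 'r \<Rightarrow> 'c \<Rightarrow> 'b" where
  "pivot_elim M x0 c0 = (\<lambda>x c. M x0 c0 * M x c - M x c0 * M x0 c)"

lemma rows_indep_mod_pivot:
  fixes P :: "('v, 'a::field) dpoly set"
  assumes "prime_ideal P" "finite S" "x0 \<in> S" "rows_indep_mod P S C M"
  shows "\<exists>c0\<in>C. M x0 c0 \<notin> P"
proof (rule ccontr)
  assume "\<not> ?thesis"
  define d :: "_ \<Rightarrow> ('v, 'a) dpoly" where "d = (\<lambda>x. if x = x0 then 1 else 0)"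
  have "(\<Sum>x\<in>S. d x * M x c) = M x0 c" for c
    using assms(2,3) by (simp add: d_def if_distrib[of "\<lambda>a. a * _"] cong: if_cong)
  with \<open>\<not> ?thesis\<close> have "d x0 \<in> P"
    by (intro rows_indep_modD[OF assms(4) _ assms(3)]) simp
  with prime_ideal_one_notin[OF assms(1)] show False by (simp add: d_def)
qed

lemma rows_indep_mod_pivot_elim:
  fixes P :: "('v, 'a::field) dpoly set"
  assumes P: "prime_ideal P" and S: "finite S" "x0 \<in> S"
    and pivot: "M x0 c0 \<notin> P" and indep: "rows_indep_mod P S C M"
  shows "rows_indep_mod P (S - {x0}) C (pivot_elim M x0 c0)"
  unfolding rows_indep_mod_def
proof (intro allI impI ballI)
  fix d x
  assume comb: "\<forall>c\<in>C. (\<Sum>x\<in>S - {x0}. d x * pivot_elim M x0 c0 x c) \<in> P"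
    and x: "x \<in> S - {x0}"
  define d' where "d' = (\<lambda>x. if x = x0 then - (\<Sum>y\<in>S - {x0}. d y * M y c0) else M x0 c0 * d x)"
  have "(\<Sum>x\<in>S. d' x * M x c) = (\<Sum>x\<in>S - {x0}. d x * pivot_elim M x0 c0 x c)" for c
  proof -
    have "(\<Sum>x\<in>S - {x0}. d' x * M x c) = (\<Sum>x\<in>S - {x0}. M x0 c0 * (d x * M x c))"
      by (intro sum.cong) (auto simp: d'_def)
    then have "(\<Sum>x\<in>S. d' x * M x c) = d' x0 * M x0 c + (\<Sum>x\<in>S - {x0}. M x0 c0 * (d x * M x c))"
      using S by (simp add: sum.remove)
    then show ?thesis
      by (simp add: d'_def pivot_elim_def sum_subtractf sum_distrib_left sum_distrib_right
          algebra_simps)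
  qed
  with comb have "d' x \<in> P"
    using x by (intro rows_indep_modD[OF indep]) simp_all
  then have "M x0 c0 * d x \<in> P"
    using x by (simp add: d'_def)
  with prime_idealD[OF P] pivot show "d x \<in> P" by blast
qed

lemma rows_indep_mod_of_pivot_elim:
  fixes P :: "('v, 'a::field) dpoly set"
  assumes P: "prime_ideal P" and S: "finite S" "x0 \<in> S" and c0: "c0 \<in> C"
    and pivot: "M x0 c0 \<notin> P" and indep: "rows_indep_mod P (S - {x0}) C (pivot_elim M x0 c0)"
  shows "rows_indep_mod P S C M"
  unfolding rows_indep_mod_def
proof (intro allI impI)
  fix d
  assume comb: "\<forall>c\<in>C. (\<Sum>x\<in>S. d x * M x c) \<in> P"
  have I: "is_ideal P" using P by (simp add: prime_ideal_def)
  define A where "A = (\<lambda>c. \<Sum>x\<in>S. d x * M x c)"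
  have A_split: "A c = d x0 * M x0 c + (\<Sum>x\<in>S - {x0}. d x * M x c)" for c
    using S by (simp add: A_def sum.remove)
  have "(\<Sum>x\<in>S - {x0}. d x * pivot_elim M x0 c0 x c) = M x0 c0 * A c - A c0 * M x0 c" for c
    by (simp add: A_split pivot_elim_def sum_subtractf sum_distrib_left sum_distrib_right
        algebra_simps)
  then have "\<forall>c\<in>C. (\<Sum>x\<in>S - {x0}. d x * pivot_elim M x0 c0 x c) \<in> P"
    using comb c0 I by (simp add: A_def ideal_diff ideal_mult_left ideal_mult_right)
  then have rest: "\<forall>x\<in>S - {x0}. d x \<in> P"
    using rows_indep_modD[OF indep] by blast
  have "A c0 - (\<Sum>x\<in>S - {x0}. d x * M x c0) \<in> P"
    using comb c0 I rest by (simp add: A_def ideal_diff ideal_sum_mult)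
  then have "d x0 * M x0 c0 \<in> P" by (simp add: A_split)
  with prime_idealD[OF P] pivot have "d x0 \<in> P" by blast
  with rest show "\<forall>x\<in>S. d x \<in> P" by blast
qed

lemma rows_indep_mod_of_map:
  fixes P :: "('v, 'a::field) dpoly set"
  assumes add: "\<And>a b. \<phi> (a + b) = \<phi> a + \<phi> b" and mult: "\<And>a b. \<phi> (a * b) = \<phi> a * \<phi> b"
    and maps_to: "\<And>a. a \<in> P \<Longrightarrow> \<phi> a \<in> P" and reflects: "\<And>a. \<phi> a \<in> P \<Longrightarrow> a \<in> P"
    and indep: "rows_indep_mod P S C (\<lambda>x c. \<phi> (M x c))"
  shows "rows_indep_mod P S C M"
  unfolding rows_indep_mod_def
proof (intro allI impI ballI)
  fix d x
  assume comb: "\<forall>c\<in>C. (\<Sum>x\<in>S. d x * M x c) \<in> P" and x: "x \<in> S"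
  have "\<phi> 0 = 0"
    by (metis add add_cancel_right_right)
  then have hom: "\<phi> (\<Sum>x\<in>S. d x * M x c) = (\<Sum>x\<in>S. \<phi> (d x) * \<phi> (M x c))" for c
    by (induction S rule: infinite_finite_induct) (simp_all add: add mult)
  have "\<forall>c\<in>C. (\<Sum>x\<in>S. \<phi> (d x) * \<phi> (M x c)) \<in> P"
    using comb maps_to by (simp flip: hom)
  with x have "\<phi> (d x) \<in> P"
    by (intro rows_indep_modD[OF indep, of "\<lambda>x. \<phi> (d x)"]) simp_all
  then show "d x \<in> P" by (rule reflects)
qed

text \<open>Here only reflection of \<open>P\<close> is needed: a pivot outside \<open>P\<close> stays outside \<open>P\<close>.\<close>
lemma rows_indep_mod_map:
  fixes P :: "('v, 'a::field) dpoly set"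
  assumes P: "prime_ideal P"
    and add: "\<And>a b. \<phi> (a + b) = \<phi> a + \<phi> b" and mult: "\<And>a b. \<phi> (a * b) = \<phi> a * \<phi> b"
    and reflects: "\<And>a. \<phi> a \<in> P \<Longrightarrow> a \<in> P"
  shows "finite S \<Longrightarrow> rows_indep_mod P S C M \<Longrightarrow> rows_indep_mod P S C (\<lambda>x c. \<phi> (M x c))"
proof (induction "card S" arbitrary: S M rule: less_induct)
  case less
  have diff: "\<phi> (a - b) = \<phi> a - \<phi> b" for a b
    by (metis add eq_diff_eq)
  show ?case
  proof (cases "S = {}")
    case True
    then show ?thesis by (simp add: rows_indep_mod_def)
  next
    case False
    then obtain x0 where x0: "x0 \<in> S" by blast
    obtain c0 where c0: "c0 \<in> C" and pivot: "M x0 c0 \<notin> P"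
      using rows_indep_mod_pivot[OF P less.prems(1) x0 less.prems(2)] by blast
    have "card (S - {x0}) < card S"
      using less.prems(1) x0 by (rule card_Diff1_less)
    moreover have "rows_indep_mod P (S - {x0}) C (pivot_elim M x0 c0)"
      using rows_indep_mod_pivot_elim[OF P less.prems(1) x0, of M c0, OF pivot less.prems(2)] .
    ultimately have "rows_indep_mod P (S - {x0}) C (\<lambda>x c. \<phi> (pivot_elim M x0 c0 x c))"
      using less.hyps[of "S - {x0}" "pivot_elim M x0 c0"] less.prems(1) by simp
    also have "(\<lambda>x c. \<phi> (pivot_elim M x0 c0 x c)) = pivot_elim (\<lambda>x c. \<phi> (M x c)) x0 c0"
      by (simp add: pivot_elim_def mult diff)
    finally show ?thesis
      using rows_indep_mod_of_pivot_elim[OF P less.prems(1) x0 c0, of "\<lambda>x c. \<phi> (M x c)"]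
        pivot reflects by blast
  qed
qed

lemma rank_mod_cong:
  assumes "\<And>x c. x \<in> R \<Longrightarrow> c \<in> C \<Longrightarrow> M x c = M' x c"
  shows "rank_mod P R C M = rank_mod P R C M'"
proof (rule rank_mod_eqI)
  fix S assume "S \<subseteq> R"
  with assms have "(\<Sum>x\<in>S. d x * M x c) = (\<Sum>x\<in>S. d x * M' x c)" if "c \<in> C" for d c
    using that by (intro sum.cong) auto
  then show "rows_indep_mod P S C M \<longleftrightarrow> rows_indep_mod P S C M'"
    unfolding rows_indep_mod_def by simp
qed

lemma rank_mod_map:
  fixes P :: "('v, 'a::field) dpoly set"
  assumes R: "finite R" and P: "prime_ideal P"
    and add: "\<And>a b. \<phi> (a + b) = \<phi> a + \<phi> b" and mult: "\<And>a b. \<phi> (a * b) = \<phi> a * \<phi> b"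
    and maps_to: "\<And>a. a \<in> P \<Longrightarrow> \<phi> a \<in> P" and reflects: "\<And>a. \<phi> a \<in> P \<Longrightarrow> a \<in> P"
  shows "rank_mod P R C (\<lambda>x c. \<phi> (M x c)) = rank_mod P R C M"
proof (rule rank_mod_eqI)
  fix S assume "S \<subseteq> R"
  show "rows_indep_mod P S C (\<lambda>x c. \<phi> (M x c)) \<longleftrightarrow> rows_indep_mod P S C M"
    using rows_indep_mod_of_map[where \<phi>=\<phi>, OF add mult maps_to reflects, of S C M]
      rows_indep_mod_map[where \<phi>=\<phi>, OF P add mult reflects finite_subset[OF \<open>S \<subseteq> R\<close> R], of C M]
    by blast
qed

text \<open>The common shape of shift_monom, dsigma and pdiff.\<close>
definition remap_pm :: "('k \<Rightarrow> 'l) \<Rightarrow> ('k \<Rightarrow> 'b::zero \<Rightarrow> 'c::comm_monoid_add)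
    \<Rightarrow> ('k \<Rightarrow>\<^sub>0 'b) \<Rightarrow> ('l \<Rightarrow>\<^sub>0 'c)" where
  "remap_pm g h f = (\<Sum>k\<in>Poly_Mapping.keys f. Poly_Mapping.single (g k) (h k (Poly_Mapping.lookup f k)))"

lemma remap_pm_add:
  assumes "\<And>k. h k 0 = 0" "\<And>k a b. h k (a + b) = h k a + h k b"
  shows "remap_pm g h (p + q) = remap_pm g h p + remap_pm g h q"
  unfolding remap_pm_def
  by (rule setsum_keys_plus_distrib[where f="\<lambda>k v. Poly_Mapping.single (g k) (h k v)"])
     (simp_all add: assms single_add)

lemma remap_pm_single:
  assumes "\<And>k. h k 0 = 0"
  shows "remap_pm g h (Poly_Mapping.single k c) = Poly_Mapping.single (g k) (h k c)"
  unfolding remap_pm_def by (cases "c = 0") (simp_all add: assms)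

lemma lookup_remap_pm_inj:
  assumes "inj g" "\<And>k. h k 0 = 0"
  shows "Poly_Mapping.lookup (remap_pm g h f) (g k) = h k (Poly_Mapping.lookup f k)"
proof -
  have "Poly_Mapping.lookup (remap_pm g h f) (g k) =
      (\<Sum>k'\<in>Poly_Mapping.keys f. if k' = k then h k' (Poly_Mapping.lookup f k') else 0)"
    unfolding remap_pm_def lookup_sum
    by (rule sum.cong) (auto simp: lookup_single when_def dest: injD[OF assms(1)])
  also have "\<dots> = h k (Poly_Mapping.lookup f k)"
    by (simp add: in_keys_iff assms(2))
  finally show ?thesis .
qed

lemma lookup_remap_pm_not_in_range:
  "y \<notin> range g \<Longrightarrow> Poly_Mapping.lookup (remap_pm g h f) y = 0"
  unfolding remap_pm_def lookup_sum by (intro sum.neutral) (auto simp: lookup_single when_def)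

lemma poly_mapping_sum_single:
  "f = (\<Sum>k\<in>Poly_Mapping.keys f. Poly_Mapping.single k (Poly_Mapping.lookup f k))"
proof -
  have "f = remap_pm id (\<lambda>_ v. v) f"
    by (rule poly_mapping_eqI) (metis id_apply inj_on_id lookup_remap_pm_inj)
  then show ?thesis by (simp add: remap_pm_def)
qed

lemma shift_monom_remap: "shift_monom m = remap_pm (\<lambda>v. (fst v, Suc (snd v))) (\<lambda>_ a. a) m"
  unfolding shift_monom_def remap_pm_def ..

lemma dsigma_remap: "dsigma s f = remap_pm shift_monom (\<lambda>_ a. s a) f"
  unfolding dsigma_def remap_pm_def ..

lemma pdiff_remap:
  "pdiff v f = remap_pm (\<lambda>m. m - Poly_Mapping.single v 1) (\<lambda>m a. of_nat (Poly_Mapping.lookup m v) * a) f"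
  unfolding pdiff_def remap_pm_def ..

lemma lookup_shift_monom_Suc: "Poly_Mapping.lookup (shift_monom m) (j, Suc l) = Poly_Mapping.lookup m (j, l)"
proof -
  have "inj (\<lambda>v::'v \<times> nat. (fst v, Suc (snd v)))" by (auto simp: inj_def prod_eq_iff)
  from lookup_remap_pm_inj[OF this, of "\<lambda>_ a. a" m "(j, l)"] show ?thesis
    by (simp add: shift_monom_remap)
qed

lemma lookup_shift_monom_0: "Poly_Mapping.lookup (shift_monom m) (j, 0) = 0"
  unfolding shift_monom_remap by (rule lookup_remap_pm_not_in_range) auto

lemma shift_monom_add: "shift_monom (a + b) = shift_monom a + shift_monom b"
  unfolding shift_monom_remap by (rule remap_pm_add) auto

lemma shift_monom_minus_single:
  "shift_monom (m - Poly_Mapping.single (j, l) 1) = shift_monom m - Poly_Mapping.single (j, Suc l) 1"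
proof (rule poly_mapping_eqI)
  fix v :: "'a \<times> nat"
  obtain j' l' where v: "v = (j', l')" by fastforce
  show "Poly_Mapping.lookup (shift_monom (m - Poly_Mapping.single (j, l) 1)) v =
        Poly_Mapping.lookup (shift_monom m - Poly_Mapping.single (j, Suc l) 1) v"
    by (cases l')
       (auto simp: v lookup_shift_monom_0 lookup_shift_monom_Suc lookup_minus lookup_single when_def)
qed

lemma pdiff_add: "pdiff v (f + g) = pdiff v f + pdiff v g"
  unfolding pdiff_remap by (rule remap_pm_add) (simp_all add: distrib_left)

lemma pdiff_single: "pdiff v (Poly_Mapping.single m c) =
   Poly_Mapping.single (m - Poly_Mapping.single v 1) (of_nat (Poly_Mapping.lookup m v) * c)"
  unfolding pdiff_remap by (rule remap_pm_single) simp

lemma pdiff_0: "pdiff v 0 = 0"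
  by (simp add: pdiff_def)

lemma pdiff_sum: "pdiff v (\<Sum>x\<in>A. F x) = (\<Sum>x\<in>A. pdiff v (F x))"
  by (induction A rule: infinite_finite_induct) (simp_all add: pdiff_0 pdiff_add)

context
  fixes s :: "'a::field \<Rightarrow> 'a"
  assumes endo: "field_endo s"
begin

lemma field_endo_add: "s (a + b) = s a + s b"
  using endo by (simp add: field_endo_def)

lemma field_endo_mult: "s (a * b) = s a * s b"
  using endo by (simp add: field_endo_def)

lemma field_endo_0: "s 0 = 0"
  by (metis add_cancel_right_right field_endo_add)

lemma field_endo_of_nat: "s (of_nat n) = of_nat n"
  using endo by (induction n) (simp_all add: field_endo_0 field_endo_add field_endo_def)

lemma dsigma_add: "dsigma s (f + g) = dsigma s f + dsigma s g"
  unfolding dsigma_remap by (rule remap_pm_add) (simp_all add: field_endo_0 field_endo_add)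

lemma dsigma_single: "dsigma s (Poly_Mapping.single m c) = Poly_Mapping.single (shift_monom m) (s c)"
  unfolding dsigma_remap by (rule remap_pm_single) (simp add: field_endo_0)

lemma dsigma_0: "dsigma s 0 = 0"
  by (simp add: dsigma_def)

lemma dsigma_sum: "dsigma s (\<Sum>x\<in>A. F x) = (\<Sum>x\<in>A. dsigma s (F x))"
  by (induction A rule: infinite_finite_induct) (simp_all add: dsigma_0 dsigma_add)

lemma dsigma_mult: "dsigma s (f * g) = dsigma s f * dsigma s g"
proof -
  let ?F = "\<lambda>m. Poly_Mapping.single m (Poly_Mapping.lookup f m)"
  let ?G = "\<lambda>n. Poly_Mapping.single n (Poly_Mapping.lookup g n)"
  have fg: "f * g = (\<Sum>m\<in>Poly_Mapping.keys f. \<Sum>n\<in>Poly_Mapping.keys g. ?F m * ?G n)"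
    by (subst (1 2) poly_mapping_sum_single) (simp add: sum_product)
  have "dsigma s f * dsigma s g =
      (\<Sum>m\<in>Poly_Mapping.keys f. \<Sum>n\<in>Poly_Mapping.keys g. dsigma s (?F m) * dsigma s (?G n))"
    by (subst (1 2) poly_mapping_sum_single) (simp add: dsigma_sum sum_product)
  also have "\<dots> = dsigma s (f * g)"
    by (simp add: fg dsigma_sum dsigma_single mult_single shift_monom_add field_endo_mult)
  finally show ?thesis ..
qed

lemma pdiff_dsigma: "pdiff (j, Suc l) (dsigma s f) = dsigma s (pdiff (j, l) f)"
proof -
  let ?F = "\<lambda>m. Poly_Mapping.single m (Poly_Mapping.lookup f m)"
  have "pdiff (j, Suc l) (dsigma s (?F m)) = dsigma s (pdiff (j, l) (?F m))" for m
    by (simp add: dsigma_single pdiff_single shift_monom_minus_single[unfolded One_nat_def]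
        lookup_shift_monom_Suc field_endo_mult field_endo_of_nat)
  then show ?thesis
    by (subst (1 2) poly_mapping_sum_single) (simp add: dsigma_sum pdiff_sum)
qed

end

lemma jac_entry_Suc:
  assumes endo: "field_endo s" and rw: "rw \<in> jac_rows k r" and i: "e - 1 \<le> i"
  shows "jac_entry s fs e (i + 1) rw cl = dsigma s (jac_entry s fs e i rw cl)"
proof -
  obtain a l where rw_eq: "rw = (a, l)" and "1 \<le> a" using rw by (auto simp: jac_rows_def)
  with i have "i + 1 + a - e = Suc (i + a - e)" by arith
  then show ?thesis
    by (simp add: jac_entry_def rw_eq pdiff_dsigma[OF endo, symmetric])
qed

theorem mainTheorem4:
  fixes s :: "'a::field_char_0 \<Rightarrow> 'a"
    and fs :: "('v::finite, 'a) dpoly list"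
    and e :: nat
    and P :: "('v, 'a) dpoly set"
  assumes "field_endo s"
    and "is_max_order fs e"
    and "e \<ge> 1"
    and "minimal_sigma_prime_over s (set fs) P"
  shows "\<forall>k i. i \<ge> e - 1 \<longrightarrow> mu s fs e P k i = mu s fs e P k (i + 1)"
proof (intro allI impI)
  fix k i assume i: "e - 1 \<le> i"
  have P: "prime_ideal P" and maps_to: "\<And>a. a \<in> P \<Longrightarrow> dsigma s a \<in> P"
    and reflects: "\<And>a. dsigma s a \<in> P \<Longrightarrow> a \<in> P"
    using assms(4) unfolding minimal_sigma_prime_over_def sigma_prime_def sigma_ideal_def
      reflexive_ideal_def by blast+
  let ?R = "jac_rows k (length fs)" and ?C = "jac_cols k :: (nat \<times> 'v) set"
  have "finite ?R" by (simp add: jac_rows_def)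
  have "rank_mod P ?R ?C (jac_entry s fs e (i + 1))
      = rank_mod P ?R ?C (\<lambda>rw cl. dsigma s (jac_entry s fs e i rw cl))"
    by (rule rank_mod_cong) (rule jac_entry_Suc[OF assms(1) _ i])
  also have "\<dots> = rank_mod P ?R ?C (jac_entry s fs e i)"
    using rank_mod_map[where \<phi>="dsigma s", OF \<open>finite ?R\<close> P dsigma_add[OF assms(1)]
        dsigma_mult[OF assms(1)] maps_to reflects, of ?C "jac_entry s fs e i"] .
  finally show "mu s fs e P k i = mu s fs e P k (i + 1)"
    unfolding mu_def by simp
qed

end
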